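(* Let $f\in L^2(\mathbb{R}^d)$ be real-valued with Fourier transform $\hat f(\omega)=\int_{\mathbb{R}^d}f(x)e^{-i\omega^Tx}dx$, magnitude $|\hat f|$, phase $\angle\hat f$, and $0<\int_{\mathbb{R}^d}|\hat f|<\infty$. Let $P$ be the set of continuous probability densities $p$ on $\mathbb{R}^d$ with $p(\omega)>0$ whenever $|\hat f(\omega)|>0$. For $p\in P$, let $W_1,\dots,W_D$ be i.i.d. with density $p$, $B_1,\dots,B_D$ i.i.d. uniform on $[0,2\pi]$ (density $p_B$) independent of the $W_k$, and $$G(x)=\sum_{k=1}^D C_k\cos(W_k^Tx+B_k),\qquad C_k = \frac{2}{D(2\pi)^d}\frac{|\hat f(W_k)|}{p(W_k)}\cos(\angle\hat f(W_k)-B_k).$$ Write $\mathbb{E}_{p,p_B}$ for expectation under this construction. Let $\tilde p(\omega) = |\hat f(\omega)|/\int_{\mathbb{R}^d}|\hat f(\tilde\omega)|d\tilde\omega$. Then for every $x\in\mathbb{R}^d$, $$\mathbb{E}_{\tilde p,p_B}[G(x)^2]\le\sqrt3\,\min_{p\in P}\mathbb{E}_{p,p_B}[G(x)^2].$$ *)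

theory Defs
  imports "HOL-Probability.Probability"
begin

text \<open>Points of R^d are modelled as vectors of type real^'n, with d = CARD('n).\<close>

definition trunc_fourier :: "(real^'n \<Rightarrow> real) \<Rightarrow> real \<Rightarrow> real^'n \<Rightarrow> complex" where
  "trunc_fourier f R w =
     (LINT x : cball 0 R | lborel. complex_of_real (f x) * cis (- (w \<bullet> x)))"

text \<open>F is (a representative of) the L^2 (Plancherel) Fourier transform of f, i.e.
  F is the L^2 limit of the truncated Fourier integrals as R tends to infinity.\<close>
definition is_fourier_transform_L2 :: "(real^'n \<Rightarrow> real) \<Rightarrow> (real^'n \<Rightarrow> complex) \<Rightarrow> bool" where
  "is_fourier_transform_L2 f F \<longleftrightarrow>
     F \<in> borel_measurable lborel \<and>
     ((\<lambda>R. \<integral>\<^sup>+ w. ennreal ((cmod (F w - trunc_fourier f R w))\<^sup>2) \<partial>lborel)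
        \<longlongrightarrow> 0) at_top"

definition admissible_densities :: "(real^'n \<Rightarrow> complex) \<Rightarrow> (real^'n \<Rightarrow> real) set" where
  "admissible_densities F =
     {p. continuous_on UNIV p \<and> (\<forall>w. 0 \<le> p w) \<and>
         (\<integral>\<^sup>+ w. ennreal (p w) \<partial>lborel) = 1 \<and>
         (\<forall>w. 0 < cmod (F w) \<longrightarrow> 0 < p w)}"

definition rff_law :: "nat \<Rightarrow> (real^'n \<Rightarrow> real) \<Rightarrow> (nat \<Rightarrow> ((real^'n) \<times> real)) measure" where
  "rff_law D p =
     PiM {..<D} (\<lambda>_. density (lborel \<Otimes>\<^sub>M lborel)
        (\<lambda>(w, b). ennreal (p w * indicator {0..2*pi} b / (2*pi))))"

definition rff_coeff :: "nat \<Rightarrow> (real^'n \<Rightarrow> complex) \<Rightarrow> (real^'n \<Rightarrow> real) \<Rightarrow> real^'n \<Rightarrow> real \<Rightarrow> real" where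
  "rff_coeff D F p w b =
     2 / (real D * (2*pi) ^ CARD('n)) * (cmod (F w) / p w) * cos (Arg (F w) - b)"

definition rff_G :: "nat \<Rightarrow> (real^'n \<Rightarrow> complex) \<Rightarrow> (real^'n \<Rightarrow> real) \<Rightarrow> real^'n
                      \<Rightarrow> (nat \<Rightarrow> ((real^'n) \<times> real)) \<Rightarrow> real" where
  "rff_G D F p x z =
     (\<Sum>k<D. rff_coeff D F p (fst (z k)) (snd (z k)) * cos (fst (z k) \<bullet> x + snd (z k)))"

definition rff_second_moment :: "nat \<Rightarrow> (real^'n \<Rightarrow> complex) \<Rightarrow> (real^'n \<Rightarrow> real) \<Rightarrow> real^'n \<Rightarrow> ennreal" where
  "rff_second_moment D F p x = (\<integral>\<^sup>+ z. ennreal ((rff_G D F p x z)\<^sup>2) \<partial>rff_law D p)"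

definition opt_density :: "(real^'n \<Rightarrow> complex) \<Rightarrow> real^'n \<Rightarrow> real" where
  "opt_density F w = cmod (F w) / (\<integral> v. cmod (F v) \<partial>lborel)"

end

theory Submission
  imports Defs
begin

(* Write F for the Fourier transform, c = 2 / (D (2 pi)^d) and Y = C_k cos(W_k.x + B_k) for one
   feature. Averaging over the uniform phase, E[Y^2] = int |F|^2 / p * h with a weight
   h(w) = c^2 ((cos(angle F(w) + w.x))^2 + 1/2) / 4 between c^2/8 and 3 c^2/8, while E[Y] does not
   depend on p at all, because p cancels against the 1/p in C_k. By independence
   E[G(x)^2] = D E[Y^2] + D (D - 1) E[Y]^2, so only E[Y^2] matters. For the optimal density
   |F| / int |F| it equals int |F| * int |F| h, and Cauchy-Schwarz against p bounds this by sqrt 3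
   times int |F|^2 / p * h, sqrt 3 being the square root of the ratio of the bounds on h. *)

lemma borel_measurable_Arg [measurable]: "Arg \<in> borel_measurable borel"
proof (rule measurable_discrete_difference[where X="{0}"])
  show "(\<lambda>z. if z \<in> - \<real>\<^sub>\<le>\<^sub>0 then Arg z else pi) \<in> borel_measurable borel"
    by (intro borel_measurable_continuous_on_if continuous_on_Arg continuous_on_const) auto
  show "(if z \<in> - \<real>\<^sub>\<le>\<^sub>0 then Arg z else pi) = Arg z" if "z \<notin> {0}" for z
    using that by (auto elim!: nonpos_Reals_cases)
qed auto

lemma has_integral_cos_sq_mult_cos_sq:
  fixes a c :: real
  shows "((\<lambda>b. (cos (a - b))\<^sup>2 * (cos (c + b))\<^sup>2) has_integral pi * ((cos (a + c))\<^sup>2 + 1/2) / 2) {0..2*pi}"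
proof -
  define C where "C = cos (a + c)"
  define g where "g = a - c"
  define \<Phi> where "\<Phi> b = C\<^sup>2 * b / 4 - C * sin (g - 2*b) / 4 + b / 8 - sin (2*g - 4*b) / 32" for b
  have "(\<Phi> has_real_derivative (cos (a - b))\<^sup>2 * (cos (c + b))\<^sup>2) (at b)" for b
  proof -
    have "cos (a - b) * cos (c + b) = (C + cos (g - 2*b)) / 2"
      by (simp add: cos_times_cos C_def g_def algebra_simps)
    then have "(cos (a - b))\<^sup>2 * (cos (c + b))\<^sup>2 = ((C + cos (g - 2*b)) / 2)\<^sup>2"
      by (metis power_mult_distrib)
    also have "\<dots> = C\<^sup>2 / 4 + C * cos (g - 2*b) / 2 + 1/8 + cos (2*g - 4*b) / 8"
      using cos_double_cos[of "g - 2*b"] by (simp add: power2_eq_square field_simps)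
    finally have "(cos (a - b))\<^sup>2 * (cos (c + b))\<^sup>2
        = C\<^sup>2 / 4 + C * cos (g - 2*b) / 2 + 1/8 + cos (2*g - 4*b) / 8" .
    then show ?thesis
      unfolding \<Phi>_def by (auto intro!: derivative_eq_intros)
  qed
  then have "((\<lambda>b. (cos (a - b))\<^sup>2 * (cos (c + b))\<^sup>2) has_integral \<Phi> (2*pi) - \<Phi> 0) {0..2*pi}"
    by (intro fundamental_theorem_of_calculus)
       (auto simp: has_real_derivative_iff_has_vector_derivative[symmetric]
             intro: has_field_derivative_at_within)
  moreover have "\<Phi> (2*pi) - \<Phi> 0 = pi * (C\<^sup>2 + 1/2) / 2"
    unfolding \<Phi>_def by (simp add: sin_diff field_simps)
  ultimately show ?thesis by (simp add: C_def)
qed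

lemma nn_integral_uniform_cos_sq_mult_cos_sq:
  fixes a c :: real
  shows "(\<integral>\<^sup>+ b. ennreal (indicator {0..2*pi} b / (2*pi) * ((cos (a - b))\<^sup>2 * (cos (c + b))\<^sup>2)) \<partial>lborel)
     = ennreal (((cos (a + c))\<^sup>2 + 1/2) / 4)"
proof -
  have "((\<lambda>b. (cos (a - b))\<^sup>2 * (cos (c + b))\<^sup>2 / (2*pi)) has_integral ((cos (a + c))\<^sup>2 + 1/2) / 4) {0..2*pi}"
    using has_integral_divide[OF has_integral_cos_sq_mult_cos_sq[of a c], of "2*pi"] by simp
  then have "(\<integral>\<^sup>+ b. ennreal ((cos (a - b))\<^sup>2 * (cos (c + b))\<^sup>2 / (2*pi)) * indicator {0..2*pi} b \<partial>lborel)
      = ennreal (((cos (a + c))\<^sup>2 + 1/2) / 4)"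
    by (intro nn_integral_has_integral_lebesgue') simp_all
  then show ?thesis
    by (simp add: indicator_mult_ennreal mult.commute)
qed

(* With s = sqrt h: int a <= int a s / sqrt m, int a h <= sqrt (K m) * int a s, and
   (int a s)^2 <= int a^2 h / p by Cauchy-Schwarz for the factors a s / sqrt p and sqrt p. *)
lemma nn_integral_mult_le_sqrt_importance_moment:
  fixes a p h :: "'a \<Rightarrow> real" and m K :: real
  assumes [measurable]: "a \<in> borel_measurable M" "p \<in> borel_measurable M" "h \<in> borel_measurable M"
    and a_nonneg: "\<And>w. 0 \<le> a w" and p_nonneg: "\<And>w. 0 \<le> p w"
    and p_prob: "(\<integral>\<^sup>+ w. ennreal (p w) \<partial>M) = 1"
    and p_pos: "\<And>w. a w \<noteq> 0 \<Longrightarrow> 0 < p w"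
    and m_pos: "0 < m" and h_lower: "\<And>w. m \<le> h w" and h_upper: "\<And>w. h w \<le> K * m"
  shows "(\<integral>\<^sup>+ w. ennreal (a w) \<partial>M) * (\<integral>\<^sup>+ w. ennreal (a w * h w) \<partial>M)
           \<le> ennreal (sqrt K) * (\<integral>\<^sup>+ w. ennreal ((a w)\<^sup>2 / p w * h w) \<partial>M)"
proof -
  define S where "S = (\<integral>\<^sup>+ w. ennreal (a w * sqrt (h w)) \<partial>M)"
  have Km_pos: "0 < K * m"
    using h_lower[of undefined] h_upper[of undefined] m_pos by linarith
  have sqrt_h: "sqrt m \<le> sqrt (h w)" "sqrt (h w) \<le> sqrt (K * m)" for w
    using h_lower h_upper by auto
  have "(\<integral>\<^sup>+ w. ennreal (a w) \<partial>M) \<le> (\<integral>\<^sup>+ w. ennreal (1 / sqrt m) * ennreal (a w * sqrt (h w)) \<partial>M)"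
  proof (intro nn_integral_mono)
    fix w
    have "a w \<le> 1 / sqrt m * (a w * sqrt (h w))"
      using mult_left_mono[OF sqrt_h(1) a_nonneg] m_pos by (simp add: field_simps)
    then have "ennreal (a w) \<le> ennreal (1 / sqrt m * (a w * sqrt (h w)))"
      by (intro ennreal_leI) simp
    also have "\<dots> = ennreal (1 / sqrt m) * ennreal (a w * sqrt (h w))"
      by (rule ennreal_mult') (use m_pos in simp)
    finally show "ennreal (a w) \<le> ennreal (1 / sqrt m) * ennreal (a w * sqrt (h w))" .
  qed
  also have "\<dots> = ennreal (1 / sqrt m) * S"
    unfolding S_def by (simp add: nn_integral_cmult)
  finally have mass_le: "(\<integral>\<^sup>+ w. ennreal (a w) \<partial>M) \<le> ennreal (1 / sqrt m) * S" .
  have "(\<integral>\<^sup>+ w. ennreal (a w * h w) \<partial>M) \<le> (\<integral>\<^sup>+ w. ennreal (sqrt (K * m)) * ennreal (a w * sqrt (h w)) \<partial>M)"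
  proof (intro nn_integral_mono)
    fix w
    have "a w * h w = (a w * sqrt (h w)) * sqrt (h w)"
      using h_lower[of w] m_pos by (simp add: mult.assoc)
    also have "\<dots> \<le> (a w * sqrt (h w)) * sqrt (K * m)"
      using a_nonneg[of w] h_lower[of w] m_pos by (intro mult_left_mono sqrt_h(2)) simp
    finally have "a w * h w \<le> sqrt (K * m) * (a w * sqrt (h w))"
      by (simp add: mult.commute)
    then have "ennreal (a w * h w) \<le> ennreal (sqrt (K * m) * (a w * sqrt (h w)))"
      by (rule ennreal_leI)
    also have "\<dots> = ennreal (sqrt (K * m)) * ennreal (a w * sqrt (h w))"
      by (rule ennreal_mult') (use Km_pos in simp)
    finally show "ennreal (a w * h w) \<le> ennreal (sqrt (K * m)) * ennreal (a w * sqrt (h w))" .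
  qed
  also have "\<dots> = ennreal (sqrt (K * m)) * S"
    unfolding S_def by (simp add: nn_integral_cmult)
  finally have weighted_le: "(\<integral>\<^sup>+ w. ennreal (a w * h w) \<partial>M) \<le> ennreal (sqrt (K * m)) * S" .
  have "S\<^sup>2 \<le> (\<integral>\<^sup>+ w. ennreal (a w * sqrt (h w) / sqrt (p w)) ^ 2 \<partial>M) * (\<integral>\<^sup>+ w. ennreal (sqrt (p w)) ^ 2 \<partial>M)"
  proof -
    have "ennreal (a w * sqrt (h w) / sqrt (p w)) * ennreal (sqrt (p w)) = ennreal (a w * sqrt (h w))" for w
      using p_pos[of w] p_nonneg[of w] by (cases "a w = 0") (auto simp: ennreal_mult''[symmetric])
    then show ?thesis
      unfolding S_def using Cauchy_Schwarz_nn_integral[of "\<lambda>w. ennreal (a w * sqrt (h w) / sqrt (p w))" M "\<lambda>w. ennreal (sqrt (p w))"]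
      by simp
  qed
  also have "\<dots> = (\<integral>\<^sup>+ w. ennreal ((a w)\<^sup>2 / p w * h w) \<partial>M)"
  proof -
    have "ennreal (a w * sqrt (h w) / sqrt (p w)) ^ 2 = ennreal ((a w)\<^sup>2 / p w * h w)"
      and "ennreal (sqrt (p w)) ^ 2 = ennreal (p w)" for w
      using a_nonneg[of w] p_nonneg[of w] h_lower[of w] m_pos
      by (simp_all add: ennreal_power power_divide power_mult_distrib)
    then show ?thesis
      by (simp add: p_prob)
  qed
  finally have S_sq_le: "S\<^sup>2 \<le> (\<integral>\<^sup>+ w. ennreal ((a w)\<^sup>2 / p w * h w) \<partial>M)" .
  have "(\<integral>\<^sup>+ w. ennreal (a w) \<partial>M) * (\<integral>\<^sup>+ w. ennreal (a w * h w) \<partial>M)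
      \<le> ennreal (1 / sqrt m) * S * (ennreal (sqrt (K * m)) * S)"
    by (intro mult_mono mass_le weighted_le) auto
  also have "\<dots> = ennreal (sqrt K) * S\<^sup>2"
    using m_pos Km_pos by (simp add: ennreal_mult'[symmetric] real_sqrt_mult power2_eq_square mult_ac)
  also have "\<dots> \<le> ennreal (sqrt K) * (\<integral>\<^sup>+ w. ennreal ((a w)\<^sup>2 / p w * h w) \<partial>M)"
    by (intro mult_left_mono S_sq_le) simp
  finally show ?thesis .
qed

lemma sum_lessThan_if_eq:
  fixes A B :: real
  assumes "k < D"
  shows "(\<Sum>j<D. if k = j then A else B) = A + real (D - 1) * B"
proof -
  have "{..<D} \<inter> {j. k = j} = {k}" "{..<D} \<inter> - {j. k = j} = {..<D} - {k}"
    using assms by auto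
  then show ?thesis
    using assms by (simp add: sum.If_cases)
qed

context
  fixes M :: "'a measure" and Y :: "'a \<Rightarrow> real"
  assumes M: "prob_space M" and Y_meas [measurable]: "Y \<in> borel_measurable M"
begin

interpretation prob_space M by (fact M)

lemma PiM_coordinate_product:
  fixes I :: "'i set"
  assumes Y_int: "integrable M Y" and Y_sq_int: "integrable M (\<lambda>u. (Y u)\<^sup>2)"
    and I: "finite I" "k \<in> I" "j \<in> I"
  shows "integrable (PiM I (\<lambda>_. M)) (\<lambda>z. Y (z k) * Y (z j))"
    and "(\<integral> z. Y (z k) * Y (z j) \<partial>PiM I (\<lambda>_. M))
           = (if k = j then \<integral> u. (Y u)\<^sup>2 \<partial>M else (\<integral> u. Y u \<partial>M)\<^sup>2)"
proof -
  interpret P: product_prob_space "\<lambda>_::'i. M" UNIV ..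
  define g where "g i u = (if i = k then Y u else 1) * (if i = j then Y u else 1)" for i u
  have g_prod: "(\<Prod>i\<in>I. g i (z i)) = Y (z k) * Y (z j)" for z
    unfolding g_def prod.distrib using I by (simp add: prod.delta)
  have g_int: "integrable M (g i)" for i
    unfolding g_def using Y_int Y_sq_int
    by (cases "i = k"; cases "i = j") (simp_all add: power2_eq_square)
  show "integrable (PiM I (\<lambda>_. M)) (\<lambda>z. Y (z k) * Y (z j))"
    using P.product_integrable_prod[OF I(1), of g] g_int by (simp add: g_prod)
  have "(\<integral> z. Y (z k) * Y (z j) \<partial>PiM I (\<lambda>_. M)) = (\<Prod>i\<in>I. integral\<^sup>L M (g i))"
    using P.product_integral_prod[OF I(1), of g] g_int by (simp add: g_prod)
  also have "\<dots> = (if k = j then \<integral> u. (Y u)\<^sup>2 \<partial>M else (\<integral> u. Y u \<partial>M)\<^sup>2)"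
  proof (cases "k = j")
    case True
    then have "integral\<^sup>L M (g i) = (if i = k then \<integral> u. (Y u)\<^sup>2 \<partial>M else 1)" for i
      unfolding g_def by (simp add: power2_eq_square prob_space)
    then show ?thesis using True I by (simp add: prod.delta)
  next
    case False
    then have "integral\<^sup>L M (g i) = (if i = k then \<integral> u. Y u \<partial>M else 1) * (if i = j then \<integral> u. Y u \<partial>M else 1)" for i
      unfolding g_def using False by (simp add: prob_space)
    then show ?thesis using False I by (simp add: prod.distrib prod.delta power2_eq_square)
  qed
  finally show "(\<integral> z. Y (z k) * Y (z j) \<partial>PiM I (\<lambda>_. M))
      = (if k = j then \<integral> u. (Y u)\<^sup>2 \<partial>M else (\<integral> u. Y u \<partial>M)\<^sup>2)" .
qed

lemma PiM_sum_square:
  assumes Y_int: "integrable M Y" and Y_sq_int: "integrable M (\<lambda>u. (Y u)\<^sup>2)"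
  shows "integrable (PiM {..<D} (\<lambda>_. M)) (\<lambda>z. (\<Sum>k<D. Y (z k))\<^sup>2)"
    and "(\<integral> z. (\<Sum>k<D. Y (z k))\<^sup>2 \<partial>PiM {..<D} (\<lambda>_. M))
           = real D * (\<integral> u. (Y u)\<^sup>2 \<partial>M) + real (D * (D - 1)) * (\<integral> u. Y u \<partial>M)\<^sup>2"
proof -
  have square: "(\<Sum>k<D. Y (z k))\<^sup>2 = (\<Sum>k<D. \<Sum>j<D. Y (z k) * Y (z j))" for z
    by (simp add: power2_eq_square sum_product)
  show "integrable (PiM {..<D} (\<lambda>_. M)) (\<lambda>z. (\<Sum>k<D. Y (z k))\<^sup>2)"
    unfolding square
    by (intro Bochner_Integration.integrable_sum PiM_coordinate_product(1)[OF Y_int Y_sq_int]) auto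
  have "(\<integral> z. (\<Sum>k<D. Y (z k))\<^sup>2 \<partial>PiM {..<D} (\<lambda>_. M))
      = (\<Sum>k<D. \<integral> z. (\<Sum>j<D. Y (z k) * Y (z j)) \<partial>PiM {..<D} (\<lambda>_. M))"
    unfolding square
    by (intro Bochner_Integration.integral_sum Bochner_Integration.integrable_sum
        PiM_coordinate_product(1)[OF Y_int Y_sq_int]) auto
  also have "\<dots> = (\<Sum>k<D. \<Sum>j<D. \<integral> z. Y (z k) * Y (z j) \<partial>PiM {..<D} (\<lambda>_. M))"
    by (intro sum.cong refl Bochner_Integration.integral_sum PiM_coordinate_product(1)[OF Y_int Y_sq_int]) auto
  also have "\<dots> = (\<Sum>k<D. \<Sum>j<D. if k = j then \<integral> u. (Y u)\<^sup>2 \<partial>M else (\<integral> u. Y u \<partial>M)\<^sup>2)"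
    by (simp add: PiM_coordinate_product(2)[OF Y_int Y_sq_int])
  also have "\<dots> = real D * (\<integral> u. (Y u)\<^sup>2 \<partial>M) + real (D * (D - 1)) * (\<integral> u. Y u \<partial>M)\<^sup>2"
    by (simp add: sum_lessThan_if_eq algebra_simps)
  finally show "(\<integral> z. (\<Sum>k<D. Y (z k))\<^sup>2 \<partial>PiM {..<D} (\<lambda>_. M))
      = real D * (\<integral> u. (Y u)\<^sup>2 \<partial>M) + real (D * (D - 1)) * (\<integral> u. Y u \<partial>M)\<^sup>2" .
qed

lemma nn_integral_PiM_sum_square_eq_infinity:
  fixes D :: nat
  assumes Y_sq_inf: "(\<integral>\<^sup>+ u. ennreal ((Y u)\<^sup>2) \<partial>M) = \<infinity>" and "0 < D"
  shows "(\<integral>\<^sup>+ z. ennreal ((\<Sum>k<D. Y (z k))\<^sup>2) \<partial>PiM {..<D} (\<lambda>_. M)) = \<infinity>"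
proof -
  interpret P: product_prob_space "\<lambda>_::nat. M" UNIV ..
  obtain n where D: "D = Suc n"
    using \<open>0 < D\<close> by (cases D) auto
  interpret P_n: prob_space "PiM {..<n} (\<lambda>_. M)"
    by (rule prob_space_PiM) (rule M)
  have last_coordinate_infinite: "(\<integral>\<^sup>+ y. ennreal ((\<Sum>k<D. Y ((x(n := y)) k))\<^sup>2) \<partial>M) = \<infinity>" for x
  proof -
    define r where "r = (\<Sum>k<n. Y (x k))"
    have sum_eq: "(\<Sum>k<D. Y ((x(n := y)) k)) = Y y + r" for y
      unfolding D r_def by (simp add: add.commute)
    have square_le: "ennreal ((Y y)\<^sup>2) \<le> 2 * ennreal ((Y y + r)\<^sup>2) + ennreal (2 * r\<^sup>2)" for y
    proof -
      have "(Y y)\<^sup>2 \<le> 2 * (Y y + r)\<^sup>2 + 2 * r\<^sup>2"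
        using sum_squares_ge_zero[of "Y y + 2*r" 0] by (simp add: power2_eq_square algebra_simps)
      then have "ennreal ((Y y)\<^sup>2) \<le> ennreal (2 * (Y y + r)\<^sup>2 + 2 * r\<^sup>2)"
        by (rule ennreal_leI)
      also have "\<dots> = 2 * ennreal ((Y y + r)\<^sup>2) + ennreal (2 * r\<^sup>2)"
        by (simp add: ennreal_plus ennreal_mult)
      finally show ?thesis .
    qed
    have "\<infinity> = (\<integral>\<^sup>+ y. ennreal ((Y y)\<^sup>2) \<partial>M)"
      using Y_sq_inf by simp
    also have "\<dots> \<le> (\<integral>\<^sup>+ y. 2 * ennreal ((Y y + r)\<^sup>2) + ennreal (2 * r\<^sup>2) \<partial>M)"
      by (intro nn_integral_mono square_le)
    also have "\<dots> = 2 * (\<integral>\<^sup>+ y. ennreal ((Y y + r)\<^sup>2) \<partial>M) + ennreal (2 * r\<^sup>2)"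
      using M by (simp add: nn_integral_add nn_integral_cmult prob_space.emeasure_space_1)
    finally have "(\<integral>\<^sup>+ y. ennreal ((Y y + r)\<^sup>2) \<partial>M) = \<infinity>"
      by (auto simp: top_unique ennreal_mult_eq_top_iff)
    then show ?thesis
      by (simp only: sum_eq)
  qed
  have "(\<integral>\<^sup>+ z. ennreal ((\<Sum>k<D. Y (z k))\<^sup>2) \<partial>PiM {..<D} (\<lambda>_. M))
      = (\<integral>\<^sup>+ x. (\<integral>\<^sup>+ y. ennreal ((\<Sum>k<D. Y ((x(n := y)) k))\<^sup>2) \<partial>M) \<partial>PiM {..<n} (\<lambda>_. M))"
    unfolding D lessThan_Suc by (rule P.product_nn_integral_insert) auto
  also have "\<dots> = \<infinity>"
    by (simp only: last_coordinate_infinite) (simp add: P_n.emeasure_space_1)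
  finally show ?thesis .
qed

lemma nn_integral_PiM_sum_square:
  assumes Y_int: "integrable M Y"
  shows "(\<integral>\<^sup>+ z. ennreal ((\<Sum>k<D. Y (z k))\<^sup>2) \<partial>PiM {..<D} (\<lambda>_. M))
           = of_nat D * (\<integral>\<^sup>+ u. ennreal ((Y u)\<^sup>2) \<partial>M)
             + of_nat (D * (D - 1)) * ennreal ((\<integral> u. Y u \<partial>M)\<^sup>2)"
proof (cases "(\<integral>\<^sup>+ u. ennreal ((Y u)\<^sup>2) \<partial>M) = \<infinity>")
  case True
  show ?thesis
  proof (cases "D = 0")
    case True
    interpret P_0: prob_space "PiM {} (\<lambda>_. M)"
      by (rule prob_space_PiM) (rule M)
    show ?thesis using True by simp
  next
    case False
    then show ?thesis
      using True nn_integral_PiM_sum_square_eq_infinity by (simp add: ennreal_mult_top)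
  qed
next
  case False
  then have Y_sq_int: "integrable M (\<lambda>u. (Y u)\<^sup>2)"
    by (intro integrableI_nonneg) (auto simp: top.not_eq_extremum)
  have "(\<integral>\<^sup>+ z. ennreal ((\<Sum>k<D. Y (z k))\<^sup>2) \<partial>PiM {..<D} (\<lambda>_. M))
      = ennreal (real D * (\<integral> u. (Y u)\<^sup>2 \<partial>M) + real (D * (D - 1)) * (\<integral> u. Y u \<partial>M)\<^sup>2)"
    using PiM_sum_square[OF Y_int Y_sq_int] by (simp add: nn_integral_eq_integral)
  also have "\<dots> = of_nat D * ennreal (\<integral> u. (Y u)\<^sup>2 \<partial>M) + of_nat (D * (D - 1)) * ennreal ((\<integral> u. Y u \<partial>M)\<^sup>2)"
    by (simp add: ennreal_plus ennreal_mult ennreal_of_nat_eq_real_of_nat del: of_nat_diff)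
  also have "ennreal (\<integral> u. (Y u)\<^sup>2 \<partial>M) = (\<integral>\<^sup>+ u. ennreal ((Y u)\<^sup>2) \<partial>M)"
    using Y_sq_int by (simp add: nn_integral_eq_integral)
  finally show ?thesis .
qed

end

definition rff_feature_law :: "(real^'n \<Rightarrow> real) \<Rightarrow> ((real^'n) \<times> real) measure" where
  "rff_feature_law p =
     density (lborel \<Otimes>\<^sub>M lborel) (\<lambda>(w, b). ennreal (p w * indicator {0..2*pi} b / (2*pi)))"

definition rff_feature :: "nat \<Rightarrow> (real^'n \<Rightarrow> complex) \<Rightarrow> (real^'n \<Rightarrow> real) \<Rightarrow> real^'n
                           \<Rightarrow> (real^'n) \<times> real \<Rightarrow> real" where
  "rff_feature D F p x u = rff_coeff D F p (fst u) (snd u) * cos (fst u \<bullet> x + snd u)"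

(* The density of W cancels against the 1/p in rff_coeff, hence the constant density 1 here. *)
definition rff_feature_mean :: "nat \<Rightarrow> (real^'n \<Rightarrow> complex) \<Rightarrow> real^'n \<Rightarrow> real" where
  "rff_feature_mean D F x =
     (\<integral> u. indicator {0..2*pi} (snd u) / (2*pi) * rff_feature D F (\<lambda>_. 1) x u \<partial>(lborel \<Otimes>\<^sub>M lborel))"

(* ((cos (angle F(w) + w.x))^2 + 1/2) / 4 is the mean of (cos (angle F(w) - b))^2 (cos (w.x + b))^2
   over the uniform phase b. *)
definition rff_weight :: "nat \<Rightarrow> (real^'n \<Rightarrow> complex) \<Rightarrow> real^'n \<Rightarrow> real^'n \<Rightarrow> real" where
  "rff_weight D F x w =
     (2 / (real D * (2*pi) ^ CARD('n)))\<^sup>2 * ((cos (Arg (F w) + w \<bullet> x))\<^sup>2 + 1/2) / 4"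

lemma rff_law_eq_PiM: "rff_law D p = PiM {..<D} (\<lambda>_. rff_feature_law p)"
  unfolding rff_law_def rff_feature_law_def ..

lemma rff_G_eq_sum: "rff_G D F p x z = (\<Sum>k<D. rff_feature D F p x (z k))"
  unfolding rff_G_def rff_feature_def ..

lemma borel_measurable_rff_weight [measurable]:
  fixes F :: "real^'n \<Rightarrow> complex"
  assumes [measurable]: "F \<in> borel_measurable lborel"
  shows "rff_weight D F x \<in> borel_measurable lborel"
  unfolding rff_weight_def by measurable

lemma rff_weight_bounds:
  fixes F :: "real^'n \<Rightarrow> complex"
  assumes "0 < D"
  defines "m \<equiv> (2 / (real D * (2*pi) ^ CARD('n)))\<^sup>2 / 8"
  shows "m \<le> rff_weight D F x w" and "rff_weight D F x w \<le> 3 * m" and "0 < m"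
  using assms abs_square_le_1[of "cos (Arg (F w) + w \<bullet> x)"]
  by (simp_all add: rff_weight_def m_def field_simps)

lemma abs_rff_coeff_le:
  fixes F :: "real^'n \<Rightarrow> complex"
  shows "\<bar>rff_coeff D F p w b\<bar> \<le> 2 / (real D * (2*pi) ^ CARD('n)) * (cmod (F w) / \<bar>p w\<bar>)"
  using mult_left_le[OF abs_cos_le_one[of "Arg (F w) - b"],
      of "2 / (real D * (2*pi) ^ CARD('n)) * (cmod (F w) / \<bar>p w\<bar>)"]
  by (simp add: rff_coeff_def abs_mult)

lemma mult_rff_coeff:
  assumes "F w \<noteq> 0 \<Longrightarrow> 0 < p w"
  shows "p w * rff_coeff D F p w b = rff_coeff D F (\<lambda>_. 1) w b"
  using assms by (cases "F w = 0") (simp_all add: rff_coeff_def)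

lemma nn_integral_rff_feature_law:
  assumes [measurable]: "p \<in> borel_measurable lborel" "\<phi> \<in> borel_measurable (lborel \<Otimes>\<^sub>M lborel)"
    and p_nonneg: "\<And>w. 0 \<le> p w"
  shows "(\<integral>\<^sup>+ u. \<phi> u \<partial>rff_feature_law p)
    = (\<integral>\<^sup>+ w. ennreal (p w) * (\<integral>\<^sup>+ b. ennreal (indicator {0..2*pi} b / (2*pi)) * \<phi> (w, b) \<partial>lborel) \<partial>lborel)"
proof -
  have "(\<integral>\<^sup>+ u. \<phi> u \<partial>rff_feature_law p)
      = (\<integral>\<^sup>+ u. ennreal (p (fst u) * indicator {0..2*pi} (snd u) / (2*pi)) * \<phi> u \<partial>(lborel \<Otimes>\<^sub>M lborel))"
    unfolding rff_feature_law_def by (subst nn_integral_density) (auto simp: case_prod_beta)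
  also have "\<dots> = (\<integral>\<^sup>+ w. \<integral>\<^sup>+ b. ennreal (p w * indicator {0..2*pi} b / (2*pi)) * \<phi> (w, b) \<partial>lborel \<partial>lborel)"
    by (subst lborel.nn_integral_fst[symmetric]) auto
  also have "\<dots> = (\<integral>\<^sup>+ w. ennreal (p w) * (\<integral>\<^sup>+ b. ennreal (indicator {0..2*pi} b / (2*pi)) * \<phi> (w, b) \<partial>lborel) \<partial>lborel)"
  proof -
    have "ennreal (p w * indicator {0..2*pi} b / (2*pi)) = ennreal (p w) * ennreal (indicator {0..2*pi} b / (2*pi))"
      for w b using p_nonneg[of w] by (simp add: ennreal_mult'[symmetric])
    then show ?thesis
      by (simp add: nn_integral_cmult mult.assoc)
  qed
  finally show ?thesis .
qed

lemma nn_integral_uniform_angle: "(\<integral>\<^sup>+ b. ennreal (indicator {0..2*pi} b / (2*pi)) \<partial>lborel) = 1"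
proof -
  have "(\<integral>\<^sup>+ b. ennreal (indicator {0..2*pi} b / (2*pi)) \<partial>lborel)
      = (\<integral>\<^sup>+ b. ennreal (1 / (2*pi)) * indicator {0..2*pi} b \<partial>lborel)"
    by (intro nn_integral_cong) (auto split: split_indicator)
  also have "\<dots> = 1"
    by (simp add: nn_integral_cmult ennreal_mult[symmetric])
  finally show ?thesis .
qed

lemma prob_space_rff_feature_law:
  assumes [measurable]: "p \<in> borel_measurable lborel"
    and "\<And>w. 0 \<le> p w" and "(\<integral>\<^sup>+ w. ennreal (p w) \<partial>lborel) = 1"
  shows "prob_space (rff_feature_law p)"
proof
  have "emeasure (rff_feature_law p) (space (rff_feature_law p)) = (\<integral>\<^sup>+ u. 1 \<partial>rff_feature_law p)"
    by simp
  also have "\<dots> = 1"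
    using assms by (subst nn_integral_rff_feature_law) (simp_all add: nn_integral_uniform_angle)
  finally show "emeasure (rff_feature_law p) (space (rff_feature_law p)) = 1" .
qed

lemma borel_measurable_rff_feature [measurable]:
  assumes [measurable]: "F \<in> borel_measurable lborel" "p \<in> borel_measurable lborel"
  shows "rff_feature D F p x \<in> borel_measurable (lborel \<Otimes>\<^sub>M lborel)"
  unfolding rff_feature_def rff_coeff_def by measurable

lemma borel_measurable_rff_feature_law [measurable]:
  assumes [measurable]: "F \<in> borel_measurable lborel" "p \<in> borel_measurable lborel"
  shows "rff_feature D F p x \<in> borel_measurable (rff_feature_law p)"
  unfolding rff_feature_law_def by (simp add: measurable_cong_sets[OF sets_density refl])

context
  fixes F :: "real^'n \<Rightarrow> complex" and p :: "real^'n \<Rightarrow> real" and D :: nat and x :: "real^'n"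
  assumes F_meas [measurable]: "F \<in> borel_measurable lborel"
    and F_fin: "(\<integral>\<^sup>+ w. ennreal (cmod (F w)) \<partial>lborel) < \<infinity>"
    and p_meas [measurable]: "p \<in> borel_measurable lborel"
    and p_nonneg: "\<And>w. 0 \<le> p w"
    and p_prob: "(\<integral>\<^sup>+ w. ennreal (p w) \<partial>lborel) = 1"
    and p_pos: "\<And>w. F w \<noteq> 0 \<Longrightarrow> 0 < p w"
begin

lemma integrable_rff_feature: "integrable (rff_feature_law p) (rff_feature D F p x)"
proof (rule integrableI_bounded)
  define c where "c = 2 / (real D * (2*pi) ^ CARD('n))"
  have "(\<integral>\<^sup>+ u. ennreal (norm (rff_feature D F p x u)) \<partial>rff_feature_law p)
      \<le> (\<integral>\<^sup>+ u. ennreal (c * (cmod (F (fst u)) / p (fst u))) \<partial>rff_feature_law p)"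
  proof (intro nn_integral_mono ennreal_leI)
    fix u
    have "norm (rff_feature D F p x u) \<le> \<bar>rff_coeff D F p (fst u) (snd u)\<bar>"
      unfolding rff_feature_def real_norm_def abs_mult by (rule mult_left_le) auto
    then show "norm (rff_feature D F p x u) \<le> c * (cmod (F (fst u)) / p (fst u))"
      using abs_rff_coeff_le[of D F p "fst u" "snd u"] p_nonneg[of "fst u"] by (simp add: c_def)
  qed
  also have "\<dots> = (\<integral>\<^sup>+ w. ennreal (p w) * ennreal (c * (cmod (F w) / p w)) \<partial>lborel)"
    using p_nonneg by (simp add: nn_integral_rff_feature_law nn_integral_multc nn_integral_uniform_angle)
  also have "\<dots> = (\<integral>\<^sup>+ w. ennreal c * ennreal (cmod (F w)) \<partial>lborel)"
  proof (intro nn_integral_cong)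
    fix w
    have "p w * (c * (cmod (F w) / p w)) = c * cmod (F w)"
      using p_pos[of w] by (cases "F w = 0") auto
    then show "ennreal (p w) * ennreal (c * (cmod (F w) / p w)) = ennreal c * ennreal (cmod (F w))"
      using p_nonneg[of w] by (simp add: c_def ennreal_mult'[symmetric])
  qed
  also have "\<dots> < \<infinity>"
    using F_fin by (simp add: nn_integral_cmult ennreal_mult_less_top)
  finally show "(\<integral>\<^sup>+ u. ennreal (norm (rff_feature D F p x u)) \<partial>rff_feature_law p) < \<infinity>" .
qed simp

lemma integral_rff_feature: "(\<integral> u. rff_feature D F p x u \<partial>rff_feature_law p) = rff_feature_mean D F x"
proof -
  have "rff_feature_law p = density (lborel \<Otimes>\<^sub>M lborel) (\<lambda>u. p (fst u) * indicator {0..2*pi} (snd u) / (2*pi))"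
    unfolding rff_feature_law_def by (simp add: case_prod_beta')
  then have "(\<integral> u. rff_feature D F p x u \<partial>rff_feature_law p)
      = (\<integral> u. p (fst u) * indicator {0..2*pi} (snd u) / (2*pi) * rff_feature D F p x u \<partial>(lborel \<Otimes>\<^sub>M lborel))"
    using p_nonneg by (simp add: integral_density)
  also have "\<dots> = rff_feature_mean D F x"
    unfolding rff_feature_mean_def rff_feature_def
    by (intro Bochner_Integration.integral_cong refl)
       (simp add: mult_rff_coeff[symmetric, OF p_pos] mult_ac)
  finally show ?thesis .
qed

lemma nn_integral_rff_feature_square:
  "(\<integral>\<^sup>+ u. ennreal ((rff_feature D F p x u)\<^sup>2) \<partial>rff_feature_law p)
     = (\<integral>\<^sup>+ w. ennreal ((cmod (F w))\<^sup>2 / p w * rff_weight D F x w) \<partial>lborel)"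
proof -
  define c where "c = 2 / (real D * (2*pi) ^ CARD('n))"
  have "ennreal (p w) * (\<integral>\<^sup>+ b. ennreal (indicator {0..2*pi} b / (2*pi)) * ennreal ((rff_feature D F p x (w, b))\<^sup>2) \<partial>lborel)
      = ennreal ((cmod (F w))\<^sup>2 / p w * rff_weight D F x w)" for w
  proof -
    define K where "K = (c * (cmod (F w) / p w))\<^sup>2"
    have "(\<integral>\<^sup>+ b. ennreal (indicator {0..2*pi} b / (2*pi)) * ennreal ((rff_feature D F p x (w, b))\<^sup>2) \<partial>lborel)
        = (\<integral>\<^sup>+ b. ennreal K * ennreal (indicator {0..2*pi} b / (2*pi) * ((cos (Arg (F w) - b))\<^sup>2 * (cos (w \<bullet> x + b))\<^sup>2)) \<partial>lborel)"
      by (intro nn_integral_cong)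
         (simp add: rff_feature_def rff_coeff_def K_def c_def ennreal_mult'[symmetric] power_mult_distrib power_divide mult_ac)
    also have "\<dots> = ennreal K * (\<integral>\<^sup>+ b. ennreal (indicator {0..2*pi} b / (2*pi)
        * ((cos (Arg (F w) - b))\<^sup>2 * (cos (w \<bullet> x + b))\<^sup>2)) \<partial>lborel)"
      by (rule nn_integral_cmult) measurable
    also have "\<dots> = ennreal K * ennreal (((cos (Arg (F w) + w \<bullet> x))\<^sup>2 + 1/2) / 4)"
      by (simp only: nn_integral_uniform_cos_sq_mult_cos_sq)
    finally have "ennreal (p w) * (\<integral>\<^sup>+ b. ennreal (indicator {0..2*pi} b / (2*pi)) * ennreal ((rff_feature D F p x (w, b))\<^sup>2) \<partial>lborel)
        = ennreal (p w) * (ennreal K * ennreal (((cos (Arg (F w) + w \<bullet> x))\<^sup>2 + 1/2) / 4))"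
      by simp
    moreover have "p w * (K * (((cos (Arg (F w) + w \<bullet> x))\<^sup>2 + 1/2) / 4))
        = (cmod (F w))\<^sup>2 / p w * rff_weight D F x w"
      unfolding K_def rff_weight_def c_def[symmetric]
      by (cases "p w = 0") (simp_all add: power_mult_distrib power_divide field_simps power2_eq_square)
    ultimately show ?thesis
      using p_nonneg[of w] by (simp add: K_def ennreal_mult'[symmetric] mult.assoc)
  qed
  moreover have "(\<integral>\<^sup>+ u. ennreal ((rff_feature D F p x u)\<^sup>2) \<partial>rff_feature_law p)
      = (\<integral>\<^sup>+ w. ennreal (p w) * (\<integral>\<^sup>+ b. ennreal (indicator {0..2*pi} b / (2*pi))
           * ennreal ((rff_feature D F p x (w, b))\<^sup>2) \<partial>lborel) \<partial>lborel)"
    by (rule nn_integral_rff_feature_law) (simp_all add: p_nonneg)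
  ultimately show ?thesis
    by simp
qed

lemma rff_second_moment_eq:
  "rff_second_moment D F p x
     = of_nat D * (\<integral>\<^sup>+ w. ennreal ((cmod (F w))\<^sup>2 / p w * rff_weight D F x w) \<partial>lborel)
       + of_nat (D * (D - 1)) * ennreal ((rff_feature_mean D F x)\<^sup>2)"
  unfolding rff_second_moment_def rff_law_eq_PiM rff_G_eq_sum
  using nn_integral_PiM_sum_square[OF prob_space_rff_feature_law[OF p_meas p_nonneg p_prob]
      borel_measurable_rff_feature_law[OF F_meas p_meas] integrable_rff_feature]
  by (simp add: nn_integral_rff_feature_square integral_rff_feature)

end

lemma opt_density_eq:
  fixes F :: "real^'n \<Rightarrow> complex"
  assumes [measurable]: "F \<in> borel_measurable lborel"
    and "(\<integral>\<^sup>+ w. ennreal (cmod (F w)) \<partial>lborel) = ennreal I" and "0 \<le> I"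
  shows "opt_density F w = cmod (F w) / I"
  using assms by (simp add: opt_density_def integral_eq_nn_integral)

lemma rff_second_moment_opt_density_le:
  fixes F :: "real^'n \<Rightarrow> complex" and p :: "real^'n \<Rightarrow> real"
  assumes F_meas [measurable]: "F \<in> borel_measurable lborel"
    and F_pos: "0 < (\<integral>\<^sup>+ w. ennreal (cmod (F w)) \<partial>lborel)"
    and F_fin: "(\<integral>\<^sup>+ w. ennreal (cmod (F w)) \<partial>lborel) < \<infinity>"
    and D_pos: "0 < D" and p: "p \<in> admissible_densities F"
  shows "rff_second_moment D F (opt_density F) x \<le> ennreal (sqrt 3) * rff_second_moment D F p x"
proof -
  obtain I where I: "(\<integral>\<^sup>+ w. ennreal (cmod (F w)) \<partial>lborel) = ennreal I" "0 < I"
    using F_pos F_fin by (cases "\<integral>\<^sup>+ w. ennreal (cmod (F w)) \<partial>lborel") auto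
  define q where "q = opt_density F"
  have q_eq: "q w = cmod (F w) / I" for w
    unfolding q_def using I by (simp add: opt_density_eq)
  have q_meas [measurable]: "q \<in> borel_measurable lborel"
    unfolding q_def opt_density_def by measurable
  have "(\<integral>\<^sup>+ w. ennreal (q w) \<partial>lborel) = (\<integral>\<^sup>+ w. ennreal (cmod (F w)) * ennreal (1 / I) \<partial>lborel)"
    using I by (intro nn_integral_cong) (simp add: q_eq ennreal_mult'[symmetric])
  also have "\<dots> = ennreal I * ennreal (1 / I)"
    by (simp add: nn_integral_multc I)
  also have "\<dots> = 1"
    using I by (simp add: ennreal_mult'[symmetric])
  finally have q_prob: "(\<integral>\<^sup>+ w. ennreal (q w) \<partial>lborel) = 1" .
  have p_cont: "continuous_on UNIV p" and p_nonneg: "\<And>w. 0 \<le> p w"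
    and p_prob: "(\<integral>\<^sup>+ w. ennreal (p w) \<partial>lborel) = 1" and p_pos: "\<And>w. F w \<noteq> 0 \<Longrightarrow> 0 < p w"
    using p unfolding admissible_densities_def by auto
  have p_meas [measurable]: "p \<in> borel_measurable lborel"
    using borel_measurable_continuous_onI[OF p_cont] by simp
  define A where "A r = (\<integral>\<^sup>+ w. ennreal ((cmod (F w))\<^sup>2 / r w * rff_weight D F x w) \<partial>lborel)" for r
  have "A q = (\<integral>\<^sup>+ w. ennreal I * ennreal (cmod (F w) * rff_weight D F x w) \<partial>lborel)"
    unfolding A_def using I by (intro nn_integral_cong) (simp add: q_eq power2_eq_square mult_ac ennreal_mult'[symmetric])
  also have "\<dots> = (\<integral>\<^sup>+ w. ennreal (cmod (F w)) \<partial>lborel) * (\<integral>\<^sup>+ w. ennreal (cmod (F w) * rff_weight D F x w) \<partial>lborel)"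
    using I by (simp add: nn_integral_cmult)
  also have "\<dots> \<le> ennreal (sqrt 3) * A p"
    unfolding A_def
    by (rule nn_integral_mult_le_sqrt_importance_moment[OF _ _ _ _ p_nonneg p_prob _
          rff_weight_bounds(3,1,2)[OF D_pos]]) (auto simp: p_pos)
  finally have A_le: "A q \<le> ennreal (sqrt 3) * A p" .
  have "rff_second_moment D F q x = of_nat D * A q + of_nat (D * (D - 1)) * ennreal ((rff_feature_mean D F x)\<^sup>2)"
    unfolding A_def using F_fin q_meas q_prob I by (intro rff_second_moment_eq) (auto simp: q_eq)
  also have "\<dots> \<le> of_nat D * (ennreal (sqrt 3) * A p) + ennreal (sqrt 3) * (of_nat (D * (D - 1)) * ennreal ((rff_feature_mean D F x)\<^sup>2))"
    using mult_right_mono[of 1 "ennreal (sqrt 3)"] by (intro add_mono mult_left_mono A_le) auto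
  also have "\<dots> = ennreal (sqrt 3) * rff_second_moment D F p x"
    unfolding A_def using F_fin p_nonneg p_prob p_pos
    by (subst rff_second_moment_eq) (auto simp: distrib_left mult_ac)
  finally show ?thesis
    unfolding q_def .
qed

theorem theorem6:
  fixes f :: "real^'n \<Rightarrow> real" and F :: "real^'n \<Rightarrow> complex" and D :: nat
  assumes f_meas: "f \<in> borel_measurable lborel"
    and f_L2: "integrable lborel (\<lambda>x. (f x)\<^sup>2)"
    and F_fourier: "is_fourier_transform_L2 f F"
    and F_pos: "0 < (\<integral>\<^sup>+ w. ennreal (cmod (F w)) \<partial>lborel)"
    and F_fin: "(\<integral>\<^sup>+ w. ennreal (cmod (F w)) \<partial>lborel) < \<infinity>"
    and D_pos: "0 < D"
  shows "\<forall>x. \<forall>p \<in> admissible_densities F.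
           rff_second_moment D F (opt_density F) x
             \<le> ennreal (sqrt 3) * rff_second_moment D F p x"
proof (intro allI ballI)
  fix x and p assume "p \<in> admissible_densities F"
  moreover have "F \<in> borel_measurable lborel"
    using F_fourier unfolding is_fourier_transform_L2_def by simp
  ultimately show "rff_second_moment D F (opt_density F) x \<le> ennreal (sqrt 3) * rff_second_moment D F p x"
    using rff_second_moment_opt_density_le F_pos F_fin D_pos by blast
qed

end
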